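(* Let $\varepsilon\in(0,1]$, $0<\mu<1$, $s,\lambda\geq0$, and let $\zeta\in\mathbb{A}^{s+1}_\lambda$ be real-valued with $36K_s^2\varepsilon|\zeta|_{1,\lambda}\leq1$. Let $F(x)=\frac{1}{(1+x^2)^{3/2}}-1$ and $F_{\varepsilon\sqrt\mu}(\partial_x\zeta):=F(\varepsilon\sqrt\mu\,\partial_x\zeta)$. Then $$|F_{\varepsilon\sqrt\mu}(\partial_x\zeta)|_{s,\lambda}\leq\varepsilon\mu|\zeta|_{s+1,\lambda}.$$
   Context: $\mathbb{T}=\mathbb{R}/2\pi\mathbb{Z}$. For $f\in L^1(\mathbb{T})$, $\widehat f(n)=\frac{1}{2\pi}\int_{\mathbb{T}}f e^{-inx}dx$; $|f|_{s,\lambda}:=\sum_{n}(1+|n|)^se^{\lambda|n|}|\widehat f(n)|$ and $\mathbb{A}^s_\lambda$ is the set of $f$ with finite norm. $K_s=1$ for $0<s\leq1$ and $K_s=2^{s-1}$ for $s=0$ or $s>1$. *)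

theory Defs
  imports "HOL-Analysis.Analysis"
begin

text \<open>Functions on the torus R/2piZ are represented by functions real => complex,
  only their values on [0, 2pi] matter.\<close>

definition fourier_coeff :: "(real \<Rightarrow> complex) \<Rightarrow> int \<Rightarrow> complex" where
  "fourier_coeff f n =
     integral {0..2*pi} (\<lambda>x. f x * exp (- (\<i> * of_int n * of_real x))) / of_real (2*pi)"

definition wiener_norm :: "real \<Rightarrow> real \<Rightarrow> (real \<Rightarrow> complex) \<Rightarrow> real" where
  "wiener_norm s lam f =
     (\<Sum>\<^sub>\<infinity> n\<in>(UNIV::int set). (1 + \<bar>real_of_int n\<bar>) powr s * exp (lam * \<bar>real_of_int n\<bar>) * norm (fourier_coeff f n))"

definition in_wiener :: "real \<Rightarrow> real \<Rightarrow> (real \<Rightarrow> complex) \<Rightarrow> bool" where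
  "in_wiener s lam f \<longleftrightarrow> f absolutely_integrable_on {0..2*pi} \<and>
     (\<lambda>n::int. (1 + \<bar>real_of_int n\<bar>) powr s * exp (lam * \<bar>real_of_int n\<bar>) * norm (fourier_coeff f n))
       summable_on UNIV"

definition fourier_deriv :: "(real \<Rightarrow> complex) \<Rightarrow> real \<Rightarrow> complex" where
  "fourier_deriv f x = (\<Sum>\<^sub>\<infinity> n\<in>(UNIV::int set). \<i> * of_int n * fourier_coeff f n * exp (\<i> * of_int n * of_real x))"

definition K_const :: "real \<Rightarrow> real" where
  "K_const s = (if 0 < s \<and> s \<le> 1 then 1 else 2 powr (s - 1))"

definition F_fun :: "real \<Rightarrow> real" where
  "F_fun x = 1 / (1 + x^2) powr (3/2) - 1"

end

theory Submission imports Defs begin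

(*
  Let a be the Fourier coefficients of eps sqrt(mu) Re zeta'. On |y| < 1, F is the binomial
  series of (1 + y^2) powr (-3/2) minus its constant term, so the coefficients of the composite
  are the sum over j of ((-3/2) gchoose (j + 1)) times the (2j + 2)-fold convolution power of a.
  The weighted l1 norms obey the Leibniz-type estimate
  |a * b|_s <= 2^s (|a|_s |b|_0 + |a|_0 |b|_s), so the k-fold power has norm at most
  k (2^s |a|_0)^(k - 1) |a|_s. With |a|_0 <= eps sqrt(mu) |zeta|_1, |a|_s <= eps sqrt(mu) |zeta|_(s+1)
  and 9 2^s eps |zeta|_1 <= 1 (which follows from the hypothesis, as 9 2^s <= 36 K_s^2), the j-th
  term is at most 2^-(j+1) eps mu |zeta|_(s+1); summing over j gives the estimate.
*)

section \<open>Convolution of absolutely summable sequences on \<int>\<close>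

lemma has_sum_product_nonneg:
  fixes f g :: "'a \<Rightarrow> real"
  assumes "\<And>m. 0 \<le> f m" "\<And>k. 0 \<le> g k" "f summable_on UNIV" "g summable_on UNIV"
  shows "((\<lambda>(m, k). f m * g k) has_sum infsum f UNIV * infsum g UNIV) UNIV"
proof -
  have row: "((\<lambda>k. f m * g k) has_sum f m * infsum g UNIV) UNIV" for m
    using has_sum_cmult_right[OF has_sum_infsum[OF assms(4)]] by simp
  have "(\<lambda>(m, k). f m * g k) summable_on UNIV \<times> UNIV"
    by (rule summable_on_SigmaI[where g="\<lambda>m. f m * infsum g UNIV"])
       (use row summable_on_cmult_left[OF assms(3)] assms(1,2) in auto)
  then have "((\<lambda>(m, k). f m * g k) has_sum (\<Sum>\<^sub>\<infinity>m. \<Sum>\<^sub>\<infinity>k. f m * g k)) UNIV"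
    using infsum_Sigma'_banach[of "\<lambda>m k. f m * g k" UNIV "\<lambda>_. UNIV"] by simp
  also have "(\<Sum>\<^sub>\<infinity>m. \<Sum>\<^sub>\<infinity>k. f m * g k) = infsum f UNIV * infsum g UNIV"
    by (simp add: infsum_cmult_right' infsum_cmult_left')
  finally show ?thesis .
qed

definition conv :: "(int \<Rightarrow> 'a) \<Rightarrow> (int \<Rightarrow> 'a) \<Rightarrow> int \<Rightarrow> 'a::{banach,real_normed_field}" where
  "conv f g n = (\<Sum>\<^sub>\<infinity>m. f m * g (n - m))"

lemma bij_betw_conv_reindex: "bij_betw (\<lambda>(n, m). (m, n - m)) UNIV (UNIV :: (int \<times> int) set)"
  by (rule bij_betwI[where g="\<lambda>(m, k). (m + k, m)"]) auto

lemma abs_summable_conv_terms: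
  fixes f g :: "int \<Rightarrow> 'a::{banach,real_normed_field}"
  assumes "(\<lambda>n. norm (f n)) summable_on UNIV" "(\<lambda>n. norm (g n)) summable_on UNIV"
  shows "(\<lambda>(n, m). norm (f m * g (n - m))) summable_on UNIV \<times> UNIV"
proof -
  have "(\<lambda>(m, k). norm (f m) * norm (g k)) summable_on UNIV"
    using has_sum_product_nonneg[OF _ _ assms] by (auto intro: has_sum_imp_summable)
  then show ?thesis
    using summable_on_reindex_bij_betw[OF bij_betw_conv_reindex, of "\<lambda>(m, k). norm (f m) * norm (g k)"]
    by (simp add: case_prod_unfold norm_mult)
qed

lemma
  fixes f g :: "int \<Rightarrow> 'a::{banach,real_normed_field}"
  assumes "(\<lambda>n. norm (f n)) summable_on UNIV" "(\<lambda>n. norm (g n)) summable_on UNIV"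
  shows abs_summable_conv_row: "(\<lambda>m. norm (f m * g (n - m))) summable_on UNIV"
    and abs_summable_conv: "(\<lambda>n. norm (conv f g n)) summable_on UNIV"
proof -
  have "(\<lambda>p. norm ((\<lambda>(n, m). f m * g (n - m)) p)) summable_on UNIV \<times> UNIV"
    using abs_summable_conv_terms[OF assms] by (simp add: case_prod_unfold)
  note rows = Infinite_Sum.abs_summable_on_Sigma_iff[THEN iffD1, OF this]
  show row: "(\<lambda>m. norm (f m * g (n - m))) summable_on UNIV" for n
    using rows by simp
  have "(\<lambda>n. \<Sum>\<^sub>\<infinity>m. norm (f m * g (n - m))) summable_on UNIV"
    using rows by (simp add: infsum_nonneg)
  then show "(\<lambda>n. norm (conv f g n)) summable_on UNIV"
    by (rule Infinite_Sum.abs_summable_on_comparison_test')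
       (use row in \<open>auto simp: conv_def intro!: norm_infsum_bound\<close>)
qed

lemma infsum_conv:
  fixes f g :: "int \<Rightarrow> 'a::{banach,real_normed_field}"
  assumes "(\<lambda>n. norm (f n)) summable_on UNIV" "(\<lambda>n. norm (g n)) summable_on UNIV"
  shows "infsum (conv f g) UNIV = infsum f UNIV * infsum g UNIV"
proof -
  define H where "H = (\<lambda>(m, k). f m * g k)"
  have H_reindex: "H ((\<lambda>(n, m). (m, n - m)) p) = (\<lambda>(n, m). f m * g (n - m)) p" for p
    by (cases p) (simp add: H_def)
  have "(\<lambda>p. norm ((\<lambda>(n, m). f m * g (n - m)) p)) summable_on UNIV \<times> UNIV"
    using abs_summable_conv_terms[OF assms] by (simp add: case_prod_unfold)
  then have terms: "(\<lambda>(n, m). f m * g (n - m)) summable_on UNIV \<times> UNIV"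
    by (rule abs_summable_summable)
  have "(\<lambda>(m, k). norm (f m) * norm (g k)) summable_on UNIV"
    using has_sum_product_nonneg[OF _ _ assms] by (auto intro: has_sum_imp_summable)
  then have "(\<lambda>p. norm (H p)) summable_on UNIV \<times> UNIV"
    by (simp add: H_def case_prod_unfold norm_mult)
  then have prod: "H summable_on UNIV \<times> UNIV"
    by (rule abs_summable_summable)
  have "infsum (conv f g) UNIV = infsum (\<lambda>(n, m). f m * g (n - m)) UNIV"
    unfolding conv_def using infsum_Sigma'_banach[of "\<lambda>n m. f m * g (n - m)" UNIV "\<lambda>_. UNIV"] terms
    by simp
  also have "\<dots> = infsum H UNIV"
    using infsum_reindex_bij_betw[OF bij_betw_conv_reindex, of H]
    by (simp add: H_reindex del: split_paired_all)
  also have "\<dots> = (\<Sum>\<^sub>\<infinity>m. \<Sum>\<^sub>\<infinity>k. f m * g k)"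
    using infsum_Sigma'_banach[of "\<lambda>m k. f m * g k" UNIV "\<lambda>_. UNIV"] prod by (simp add: H_def)
  also have "\<dots> = infsum f UNIV * infsum g UNIV"
    by (simp add: infsum_cmult_right' infsum_cmult_left')
  finally show ?thesis .
qed

section \<open>Weighted summability of coefficient sequences\<close>

definition wiener_weight :: "real \<Rightarrow> real \<Rightarrow> int \<Rightarrow> real" where
  "wiener_weight s lam n = (1 + \<bar>real_of_int n\<bar>) powr s * exp (lam * \<bar>real_of_int n\<bar>)"

definition coeff_summable :: "real \<Rightarrow> real \<Rightarrow> (int \<Rightarrow> complex) \<Rightarrow> bool" where
  "coeff_summable s lam a \<longleftrightarrow> (\<lambda>n. wiener_weight s lam n * norm (a n)) summable_on UNIV"

definition coeff_norm :: "real \<Rightarrow> real \<Rightarrow> (int \<Rightarrow> complex) \<Rightarrow> real" where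
  "coeff_norm s lam a = (\<Sum>\<^sub>\<infinity>n. wiener_weight s lam n * norm (a n))"

lemma wiener_norm_eq_coeff_norm: "wiener_norm s lam f = coeff_norm s lam (fourier_coeff f)"
  by (simp add: wiener_norm_def coeff_norm_def wiener_weight_def)

lemma in_wiener_iff:
  "in_wiener s lam f \<longleftrightarrow>
     f absolutely_integrable_on {0..2*pi} \<and> coeff_summable s lam (fourier_coeff f)"
  by (simp add: in_wiener_def coeff_summable_def wiener_weight_def)

lemma wiener_weight_nonneg: "0 \<le> wiener_weight s lam n"
  by (simp add: wiener_weight_def)

lemma wiener_weight_uminus [simp]: "wiener_weight s lam (- n) = wiener_weight s lam n"
  by (simp add: wiener_weight_def)

lemma wiener_weight_add_one:
  "wiener_weight (s + 1) lam n = (1 + \<bar>real_of_int n\<bar>) * wiener_weight s lam n"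
  by (simp add: wiener_weight_def powr_add mult_ac)

lemma wiener_weight_zero: "wiener_weight 0 lam n = exp (lam * \<bar>real_of_int n\<bar>)"
  by (simp add: wiener_weight_def)

lemma wiener_weight_mono: "s \<le> t \<Longrightarrow> wiener_weight s lam n \<le> wiener_weight t lam n"
  unfolding wiener_weight_def by (rule mult_right_mono) (auto intro!: powr_mono)

lemma one_le_wiener_weight:
  assumes "0 \<le> s" "0 \<le> lam"
  shows "1 \<le> wiener_weight s lam n"
proof -
  have "1 \<le> exp (lam * \<bar>real_of_int n\<bar>)"
    using assms by simp
  also have "\<dots> = wiener_weight 0 lam n"
    by (simp add: wiener_weight_zero)
  also have "\<dots> \<le> wiener_weight s lam n"
    by (rule wiener_weight_mono[OF assms(1)])
  finally show ?thesis .
qed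

lemma wiener_weight_zero_submult:
  assumes "0 \<le> lam"
  shows "wiener_weight 0 lam n \<le> wiener_weight 0 lam m * wiener_weight 0 lam (n - m)"
proof -
  have "lam * \<bar>real_of_int n\<bar> \<le> lam * \<bar>real_of_int m\<bar> + lam * \<bar>real_of_int (n - m)\<bar>"
    using assms by (simp add: mult_left_mono flip: distrib_left)
  then show ?thesis
    by (simp add: wiener_weight_zero flip: exp_add)
qed

lemma powr_le_two_powr_add:
  fixes p q r s :: real
  assumes "0 < p" "0 < q" "0 < r" "r \<le> p + q" "0 \<le> s"
  shows "r powr s \<le> 2 powr s * (p powr s + q powr s)"
proof -
  have "r powr s \<le> (2 * max p q) powr s"
    using assms by (intro powr_mono2) auto
  also have "\<dots> = 2 powr s * max p q powr s"
    using assms by (simp add: powr_mult)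
  also have "max p q powr s \<le> p powr s + q powr s"
    by (simp add: max_def)
  finally show ?thesis
    by simp
qed

text \<open>A Peetre-type inequality: as \<open>1 + \<bar>n\<bar> \<le> 2 * max (1 + \<bar>m\<bar>) (1 + \<bar>n - m\<bar>)\<close>, the
  polynomial part of the weight goes to one of the two factors; the exponential part is submultiplicative.\<close>
lemma wiener_weight_le_split:
  assumes "0 \<le> s" "0 \<le> lam"
  shows "wiener_weight s lam n \<le>
    2 powr s * (wiener_weight s lam m * wiener_weight 0 lam (n - m)
      + wiener_weight 0 lam m * wiener_weight s lam (n - m))"
proof -
  define p q r where "p = 1 + \<bar>real_of_int m\<bar>" and "q = 1 + \<bar>real_of_int (n - m)\<bar>"
    and "r = 1 + \<bar>real_of_int n\<bar>"
  have r: "r powr s \<le> 2 powr s * (p powr s + q powr s)"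
    by (rule powr_le_two_powr_add) (auto simp: p_def q_def r_def assms)
  have "wiener_weight s lam n = r powr s * wiener_weight 0 lam n"
    by (simp add: wiener_weight_def r_def)
  also have "\<dots> \<le> (2 powr s * (p powr s + q powr s)) * (wiener_weight 0 lam m * wiener_weight 0 lam (n - m))"
    by (intro mult_mono r wiener_weight_zero_submult assms) (auto simp: wiener_weight_nonneg)
  also have "\<dots> = 2 powr s * ((p powr s * wiener_weight 0 lam m) * wiener_weight 0 lam (n - m)
      + wiener_weight 0 lam m * (q powr s * wiener_weight 0 lam (n - m)))"
    by (simp add: algebra_simps)
  also have "\<dots> = 2 powr s * (wiener_weight s lam m * wiener_weight 0 lam (n - m)
      + wiener_weight 0 lam m * wiener_weight s lam (n - m))"
    unfolding wiener_weight_def p_def q_def by (simp add: add_pos_nonneg[THEN less_imp_neq, symmetric])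
  finally show ?thesis .
qed

lemma coeff_norm_nonneg: "0 \<le> coeff_norm s lam a"
  unfolding coeff_norm_def by (rule infsum_nonneg) (simp add: wiener_weight_nonneg)

lemma coeff_summable_abs_summable:
  assumes "0 \<le> s" "0 \<le> lam" "coeff_summable s lam a"
  shows "(\<lambda>n. norm (a n)) summable_on UNIV"
proof (rule summable_on_comparison_test[OF assms(3)[unfolded coeff_summable_def]])
  show "norm (a n) \<le> wiener_weight s lam n * norm (a n)" for n
    using one_le_wiener_weight[OF assms(1,2), of n] by (simp add: mult_le_cancel_right1)
qed simp

lemma coeff_summable_mono:
  assumes "s \<le> t" "coeff_summable t lam a"
  shows "coeff_summable s lam a"
  using assms(2) unfolding coeff_summable_def
  by (elim summable_on_comparison_test)
     (use assms(1) in \<open>auto intro!: mult_right_mono wiener_weight_mono simp: wiener_weight_nonneg\<close>)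

lemma coeff_summable_cmult:
  "coeff_summable s lam a \<Longrightarrow> coeff_summable s lam (\<lambda>n. c * a n)"
  unfolding coeff_summable_def norm_mult
  by (subst mult.left_commute) (rule summable_on_cmult_right)

lemma coeff_norm_cmult: "coeff_norm s lam (\<lambda>n. c * a n) = norm c * coeff_norm s lam a"
  unfolding coeff_norm_def norm_mult
  by (subst mult.left_commute) (rule infsum_cmult_right')

lemma weighted_norm_conv_pointwise_le:
  fixes a b :: "int \<Rightarrow> complex" and w u v u' v' :: "int \<Rightarrow> real"
  assumes "0 \<le> w n" and weight_split: "\<And>m. w n \<le> u m * v (n - m) + u' m * v' (n - m)"
    and ab: "(\<lambda>m. norm (a m * b (n - m))) summable_on UNIV"
    and rows: "(\<lambda>m. u m * norm (a m) * (v (n - m) * norm (b (n - m)))) summable_on UNIV"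
      "(\<lambda>m. u' m * norm (a m) * (v' (n - m) * norm (b (n - m)))) summable_on UNIV"
  shows "w n * norm (conv a b n) \<le>
    conv (\<lambda>n. u n * norm (a n)) (\<lambda>n. v n * norm (b n)) n
      + conv (\<lambda>n. u' n * norm (a n)) (\<lambda>n. v' n * norm (b n)) n"
proof -
  have "w n * norm (conv a b n) \<le> w n * (\<Sum>\<^sub>\<infinity>m. norm (a m * b (n - m)))"
    unfolding conv_def using assms(1) ab by (intro mult_left_mono norm_infsum_bound) auto
  also have "\<dots> = (\<Sum>\<^sub>\<infinity>m. w n * norm (a m * b (n - m)))"
    by (simp add: infsum_cmult_right')
  also have "\<dots> \<le> (\<Sum>\<^sub>\<infinity>m. u m * norm (a m) * (v (n - m) * norm (b (n - m)))
      + u' m * norm (a m) * (v' (n - m) * norm (b (n - m))))"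
  proof (rule infsum_mono)
    show "(\<lambda>m. w n * norm (a m * b (n - m))) summable_on UNIV"
      using ab by (rule summable_on_cmult_right)
    show "(\<lambda>m. u m * norm (a m) * (v (n - m) * norm (b (n - m)))
        + u' m * norm (a m) * (v' (n - m) * norm (b (n - m)))) summable_on UNIV"
      using rows by (rule summable_on_add)
    show "w n * norm (a m * b (n - m)) \<le> u m * norm (a m) * (v (n - m) * norm (b (n - m)))
        + u' m * norm (a m) * (v' (n - m) * norm (b (n - m)))" for m
      using mult_right_mono[OF weight_split[of m], of "norm (a m) * norm (b (n - m))"]
      by (simp add: norm_mult algebra_simps)
  qed
  also have "\<dots> = conv (\<lambda>n. u n * norm (a n)) (\<lambda>n. v n * norm (b n)) n
      + conv (\<lambda>n. u' n * norm (a n)) (\<lambda>n. v' n * norm (b n)) n"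
    unfolding conv_def by (rule infsum_add[OF rows])
  finally show ?thesis .
qed

lemma weighted_norm_conv_le:
  fixes a b :: "int \<Rightarrow> complex" and w u v u' v' :: "int \<Rightarrow> real"
  assumes nonneg: "\<And>n. 0 \<le> u n" "\<And>n. 0 \<le> v n" "\<And>n. 0 \<le> u' n" "\<And>n. 0 \<le> v' n" "\<And>n. 0 \<le> w n"
    and weight_split: "\<And>n m. w n \<le> u m * v (n - m) + u' m * v' (n - m)"
    and a: "(\<lambda>n. norm (a n)) summable_on UNIV" and b: "(\<lambda>n. norm (b n)) summable_on UNIV"
    and ua: "(\<lambda>n. u n * norm (a n)) summable_on UNIV" and vb: "(\<lambda>n. v n * norm (b n)) summable_on UNIV"
    and u'a: "(\<lambda>n. u' n * norm (a n)) summable_on UNIV" and v'b: "(\<lambda>n. v' n * norm (b n)) summable_on UNIV"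
  shows "(\<lambda>n. w n * norm (conv a b n)) summable_on UNIV"
    and "(\<Sum>\<^sub>\<infinity>n. w n * norm (conv a b n)) \<le>
          (\<Sum>\<^sub>\<infinity>n. u n * norm (a n)) * (\<Sum>\<^sub>\<infinity>n. v n * norm (b n)) +
          (\<Sum>\<^sub>\<infinity>n. u' n * norm (a n)) * (\<Sum>\<^sub>\<infinity>n. v' n * norm (b n))"
proof -
  define A B A' B' where "A = (\<lambda>n. u n * norm (a n))" and "B = (\<lambda>n. v n * norm (b n))"
    and "A' = (\<lambda>n. u' n * norm (a n))" and "B' = (\<lambda>n. v' n * norm (b n))"
  have norms: "(\<lambda>n. norm (A n)) summable_on UNIV" "(\<lambda>n. norm (B n)) summable_on UNIV"
    "(\<lambda>n. norm (A' n)) summable_on UNIV" "(\<lambda>n. norm (B' n)) summable_on UNIV"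
    using ua vb u'a v'b nonneg by (simp_all add: A_def B_def A'_def B'_def abs_mult)
  have pointwise: "w n * norm (conv a b n) \<le> conv A B n + conv A' B' n" for n
    unfolding A_def B_def A'_def B'_def
    using abs_summable_summable[OF abs_summable_conv_row[OF norms(1,2)]]
      abs_summable_summable[OF abs_summable_conv_row[OF norms(3,4)]]
    by (intro weighted_norm_conv_pointwise_le nonneg(5) weight_split abs_summable_conv_row[OF a b])
      (simp_all add: A_def B_def A'_def B'_def)
  have sum: "(\<lambda>n. conv A B n + conv A' B' n) summable_on UNIV"
    by (rule summable_on_add[OF abs_summable_summable[OF abs_summable_conv[OF norms(1,2)]]
          abs_summable_summable[OF abs_summable_conv[OF norms(3,4)]]])
  show summable: "(\<lambda>n. w n * norm (conv a b n)) summable_on UNIV"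
    by (rule summable_on_comparison_test[OF sum pointwise]) (simp add: nonneg)
  have "(\<Sum>\<^sub>\<infinity>n. w n * norm (conv a b n)) \<le> (\<Sum>\<^sub>\<infinity>n. conv A B n + conv A' B' n)"
    by (rule infsum_mono[OF summable sum pointwise])
  also have "\<dots> = infsum A UNIV * infsum B UNIV + infsum A' UNIV * infsum B' UNIV"
    using abs_summable_summable[OF abs_summable_conv[OF norms(1,2)]]
      abs_summable_summable[OF abs_summable_conv[OF norms(3,4)]]
      infsum_conv[OF norms(1,2)] infsum_conv[OF norms(3,4)]
    by (simp add: infsum_add)
  finally show "(\<Sum>\<^sub>\<infinity>n. w n * norm (conv a b n)) \<le>
          (\<Sum>\<^sub>\<infinity>n. u n * norm (a n)) * (\<Sum>\<^sub>\<infinity>n. v n * norm (b n)) +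
          (\<Sum>\<^sub>\<infinity>n. u' n * norm (a n)) * (\<Sum>\<^sub>\<infinity>n. v' n * norm (b n))"
    by (simp add: A_def B_def A'_def B'_def)
qed

lemma
  assumes "0 \<le> lam" "coeff_summable 0 lam a" "coeff_summable 0 lam b"
  shows coeff_summable_conv_zero: "coeff_summable 0 lam (conv a b)"
    and coeff_norm_conv_zero_le: "coeff_norm 0 lam (conv a b) \<le> coeff_norm 0 lam a * coeff_norm 0 lam b"
proof -
  note bound = weighted_norm_conv_le[where w="wiener_weight 0 lam" and u="wiener_weight 0 lam"
      and v="wiener_weight 0 lam" and u'="\<lambda>_. 0" and v'="\<lambda>_. 0" and a=a and b=b]
  note prems = wiener_weight_nonneg wiener_weight_zero_submult[OF assms(1)]
    coeff_summable_abs_summable[OF order_refl assms(1,2)] coeff_summable_abs_summable[OF order_refl assms(1,3)]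
    assms(2,3)[unfolded coeff_summable_def]
  show "coeff_summable 0 lam (conv a b)"
    unfolding coeff_summable_def using bound(1) prems by simp
  show "coeff_norm 0 lam (conv a b) \<le> coeff_norm 0 lam a * coeff_norm 0 lam b"
    unfolding coeff_norm_def using bound(2) prems by simp
qed

lemma
  assumes "0 \<le> s" "0 \<le> lam" "coeff_summable 0 lam a" "coeff_summable s lam a"
    "coeff_summable 0 lam b" "coeff_summable s lam b"
  shows coeff_summable_conv: "coeff_summable s lam (conv a b)"
    and coeff_norm_conv_le: "coeff_norm s lam (conv a b) \<le>
      2 powr s * (coeff_norm s lam a * coeff_norm 0 lam b + coeff_norm 0 lam a * coeff_norm s lam b)"
proof -
  define K where "K = (2::real) powr s"
  note bound = weighted_norm_conv_le[where w="wiener_weight s lam" and u="\<lambda>n. K * wiener_weight s lam n"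
      and v="wiener_weight 0 lam" and u'="\<lambda>n. K * wiener_weight 0 lam n" and v'="wiener_weight s lam"
      and a=a and b=b]
  have weight_split: "wiener_weight s lam n \<le> K * wiener_weight s lam m * wiener_weight 0 lam (n - m)
      + K * wiener_weight 0 lam m * wiener_weight s lam (n - m)" for n m
    using wiener_weight_le_split[OF assms(1,2), of n m] by (simp add: K_def algebra_simps)
  have scaled: "(\<lambda>n. K * wiener_weight t lam n * norm (a n)) summable_on UNIV"
    if "coeff_summable t lam a" for t
    using summable_on_cmult_right[OF that[unfolded coeff_summable_def], of K] by (simp add: mult.assoc)
  have scaled_sum: "(\<Sum>\<^sub>\<infinity>n. K * wiener_weight t lam n * norm (a n)) = K * coeff_norm t lam a" for t
    unfolding coeff_norm_def by (simp add: mult.assoc infsum_cmult_right')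
  have "0 \<le> K * wiener_weight t lam n" for t n
    by (simp add: K_def wiener_weight_nonneg)
  note prems = this wiener_weight_nonneg weight_split scaled assms(3,4)
    coeff_summable_abs_summable[OF order_refl assms(2,3)] coeff_summable_abs_summable[OF order_refl assms(2,5)]
    assms(3-6)[unfolded coeff_summable_def]
  show "coeff_summable s lam (conv a b)"
    unfolding coeff_summable_def using bound(1) prems by (simp add: K_def)
  show "coeff_norm s lam (conv a b) \<le>
      2 powr s * (coeff_norm s lam a * coeff_norm 0 lam b + coeff_norm 0 lam a * coeff_norm s lam b)"
  proof -
    have "coeff_norm s lam (conv a b) \<le>
        K * coeff_norm s lam a * coeff_norm 0 lam b + K * coeff_norm 0 lam a * coeff_norm s lam b"
      using bound(2)[unfolded scaled_sum] prems by (simp add: coeff_norm_def)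
    then show ?thesis
      by (simp add: K_def algebra_simps)
  qed
qed

text \<open>\<open>conv_pow a k\<close> is the \<open>(k + 1)\<close>-fold convolution power of \<open>a\<close>.\<close>
primrec conv_pow :: "(int \<Rightarrow> complex) \<Rightarrow> nat \<Rightarrow> int \<Rightarrow> complex" where
  "conv_pow a 0 = a"
| "conv_pow a (Suc k) = conv a (conv_pow a k)"

lemma coeff_summable_conv_pow:
  assumes "0 \<le> s" "0 \<le> lam" "coeff_summable 0 lam a" "coeff_summable s lam a"
  shows "coeff_summable s lam (conv_pow a k)"
proof -
  have "coeff_summable 0 lam (conv_pow a k) \<and> coeff_summable s lam (conv_pow a k)"
    by (induction k) (simp_all add: assms coeff_summable_conv_zero coeff_summable_conv)
  then show ?thesis ..
qed

lemma coeff_norm_conv_pow_zero_le: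
  assumes "0 \<le> lam" "coeff_summable 0 lam a"
  shows "coeff_norm 0 lam (conv_pow a k) \<le> coeff_norm 0 lam a ^ Suc k"
proof (induction k)
  case (Suc k)
  have "coeff_norm 0 lam (conv_pow a (Suc k)) \<le> coeff_norm 0 lam a * coeff_norm 0 lam (conv_pow a k)"
    using coeff_norm_conv_zero_le[OF assms coeff_summable_conv_pow[OF order_refl assms assms(2)]]
    by simp
  also have "\<dots> \<le> coeff_norm 0 lam a * coeff_norm 0 lam a ^ Suc k"
    by (rule mult_left_mono[OF Suc coeff_norm_nonneg])
  finally show ?case
    by simp
qed simp

lemma coeff_norm_conv_pow_le:
  assumes "0 \<le> s" "0 \<le> lam" "coeff_summable 0 lam a" "coeff_summable s lam a"
  shows "coeff_norm s lam (conv_pow a k) \<le>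
    real (Suc k) * (2 powr s * coeff_norm 0 lam a) ^ k * coeff_norm s lam a"
proof (induction k)
  case (Suc k)
  define K A0 As where "K = (2::real) powr s" and "A0 = coeff_norm 0 lam a"
    and "As = coeff_norm s lam a"
  have K: "1 \<le> K"
    using assms(1) by (simp add: K_def ge_one_powr_ge_zero)
  have A: "0 \<le> A0" "0 \<le> As"
    by (simp_all add: A0_def As_def coeff_norm_nonneg)
  have "coeff_norm s lam (conv_pow a (Suc k)) \<le>
      K * (As * coeff_norm 0 lam (conv_pow a k) + A0 * coeff_norm s lam (conv_pow a k))"
    using coeff_norm_conv_le[OF assms coeff_summable_conv_pow[OF order_refl assms(2,3,3)]
        coeff_summable_conv_pow[OF assms]]
    by (simp add: K_def A0_def As_def)
  also have "\<dots> \<le> K * (As * A0 ^ Suc k + A0 * (real (Suc k) * (K * A0) ^ k * As))"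
    using coeff_norm_conv_pow_zero_le[OF assms(2,3)] Suc K A
    by (intro mult_left_mono add_mono) (simp_all add: K_def A0_def As_def)
  also have "\<dots> = (K * A0 ^ Suc k + real (Suc k) * (K * A0) ^ Suc k) * As"
    by (simp add: algebra_simps)
  also have "\<dots> \<le> ((K * A0) ^ Suc k + real (Suc k) * (K * A0) ^ Suc k) * As"
  proof -
    have "K * A0 ^ Suc k \<le> K ^ Suc k * A0 ^ Suc k"
      using K A by (intro mult_right_mono) (simp_all add: power_increasing[of 1 "Suc k" K, simplified])
    then have "K * A0 ^ Suc k \<le> (K * A0) ^ Suc k"
      by (simp only: power_mult_distrib)
    then show ?thesis
      by (intro mult_right_mono add_right_mono A(2))
  qed
  also have "\<dots> = real (Suc (Suc k)) * (K * A0) ^ Suc k * As"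
    by (simp add: algebra_simps)
  finally show ?case
    by (simp add: K_def A0_def As_def)
qed simp

section \<open>Trigonometric series\<close>

definition trig_series :: "(int \<Rightarrow> complex) \<Rightarrow> real \<Rightarrow> complex" where
  "trig_series e x = (\<Sum>\<^sub>\<infinity>n. e n * exp (\<i> * of_int n * of_real x))"

lemma norm_exp_i_int_times [simp]: "norm (exp (\<i> * of_int n * of_real x)) = 1"
  using norm_exp_i_times[of "of_int n * x"] by (simp add: mult.assoc)

lemma abs_summable_trig_series_terms:
  assumes "(\<lambda>n. norm (e n)) summable_on UNIV"
  shows "(\<lambda>n. norm (e n * exp (\<i> * of_int n * of_real x))) summable_on UNIV"
  using assms by (simp add: norm_mult)

lemma has_sum_trig_series:
  assumes "(\<lambda>n. norm (e n)) summable_on UNIV"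
  shows "((\<lambda>n. e n * exp (\<i> * of_int n * of_real x)) has_sum trig_series e x) UNIV"
  unfolding trig_series_def
  by (rule has_sum_infsum, rule abs_summable_summable[OF abs_summable_trig_series_terms[OF assms]])

lemma norm_trig_series_le:
  assumes "0 \<le> s" "0 \<le> lam" "coeff_summable s lam e"
  shows "norm (trig_series e x) \<le> coeff_norm s lam e"
proof -
  have e: "(\<lambda>n. norm (e n)) summable_on UNIV"
    by (rule coeff_summable_abs_summable[OF assms])
  have "norm (trig_series e x) \<le> (\<Sum>\<^sub>\<infinity>n. norm (e n * exp (\<i> * of_int n * of_real x)))"
    unfolding trig_series_def by (rule norm_infsum_bound[OF abs_summable_trig_series_terms[OF e]])
  also have "\<dots> = (\<Sum>\<^sub>\<infinity>n. norm (e n))"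
    by (simp add: norm_mult)
  also have "\<dots> \<le> coeff_norm s lam e"
    unfolding coeff_norm_def using e assms(3)[unfolded coeff_summable_def]
    by (rule infsum_mono) (simp add: one_le_wiener_weight[OF assms(1,2)] mult_le_cancel_right1)
  finally show ?thesis .
qed

lemma trig_series_cmult: "trig_series (\<lambda>n. c * e n) x = c * trig_series e x"
  unfolding trig_series_def by (simp add: mult.assoc infsum_cmult_right')

lemma trig_series_mult:
  assumes "(\<lambda>n. norm (a n)) summable_on UNIV" "(\<lambda>n. norm (b n)) summable_on UNIV"
  shows "trig_series a x * trig_series b x = trig_series (conv a b) x"
proof -
  define E where "E n = exp (\<i> * of_int n * of_real x)" for n
  define f g where "f = (\<lambda>n. a n * E n)" and "g = (\<lambda>n. b n * E n)"
  have fg: "(\<lambda>n. norm (f n)) summable_on UNIV" "(\<lambda>n. norm (g n)) summable_on UNIV"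
    using abs_summable_trig_series_terms[OF assms(1)] abs_summable_trig_series_terms[OF assms(2)]
    by (simp_all add: f_def g_def E_def)
  have "f m * g (n - m) = a m * b (n - m) * E n" for n m
    by (simp add: f_def g_def E_def algebra_simps flip: exp_add)
  then have conv_fg: "conv f g = (\<lambda>n. conv a b n * E n)"
    unfolding conv_def by (simp add: infsum_cmult_left' fun_eq_iff)
  have "trig_series a x * trig_series b x = infsum f UNIV * infsum g UNIV"
    by (simp add: trig_series_def f_def g_def E_def)
  also have "\<dots> = infsum (conv f g) UNIV"
    by (rule infsum_conv[OF fg, symmetric])
  also have "\<dots> = trig_series (conv a b) x"
    by (simp add: conv_fg trig_series_def E_def)
  finally show ?thesis .
qed

lemma trig_series_conv_pow:
  assumes "0 \<le> lam" "coeff_summable 0 lam a"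
  shows "trig_series (conv_pow a k) x = trig_series a x ^ Suc k"
proof (induction k)
  case (Suc k)
  have "(\<lambda>n. norm (conv_pow a k n)) summable_on UNIV"
    using coeff_summable_abs_summable[OF order_refl assms(1)]
      coeff_summable_conv_pow[OF order_refl assms assms(2)] .
  then have "trig_series (conv_pow a (Suc k)) x = trig_series a x * trig_series (conv_pow a k) x"
    using trig_series_mult[OF coeff_summable_abs_summable[OF order_refl assms]] by simp
  then show ?case
    using Suc by simp
qed simp

lemma continuous_on_trig_series:
  assumes "(\<lambda>n. norm (e n)) summable_on UNIV"
  shows "continuous_on UNIV (trig_series e)"
proof (rule uniform_limit_theorem)
  show "uniform_limit UNIV (\<lambda>X x. \<Sum>n\<in>X. e n * exp (\<i> * of_int n * of_real x)) (trig_series e)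
      (finite_subsets_at_top UNIV)"
    unfolding trig_series_def
    by (rule Weierstrass_m_test_general[where M="\<lambda>n. norm (e n)"]) (use assms in \<open>auto simp: norm_mult\<close>)
qed (auto intro!: always_eventually continuous_intros)

lemma has_integral_exp_i_int_times:
  "((\<lambda>x. exp (\<i> * of_int k * of_real x)) has_integral (if k = 0 then of_real (2*pi) else 0)) {0..2*pi}"
proof (cases "k = 0")
  case True
  then show ?thesis
    using has_integral_const_real[of "1::complex" 0 "2*pi"] by (simp add: scaleR_conv_of_real)
next
  case False
  define F where "F z = exp (\<i> * of_int k * z) / (\<i> * of_int k)" for z :: complex
  have F: "((\<lambda>x. F (of_real x)) has_vector_derivative exp (\<i> * of_int k * of_real x))
      (at x within {0..2*pi})" for x
    by (rule has_vector_derivative_real_field) (use False in \<open>auto simp: F_def intro!: derivative_eq_intros\<close>)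
  have "((\<lambda>x. exp (\<i> * of_int k * of_real x)) has_integral (F (of_real (2*pi)) - F (of_real 0))) {0..2*pi}"
    by (rule fundamental_theorem_of_calculus) (use F in auto)
  moreover have "exp (\<i> * of_int k * of_real (2*pi)) = 1"
    using exp_integer_2pi[of "of_int k"] by (simp add: mult_ac)
  ultimately show ?thesis
    using False by (simp add: F_def)
qed

text \<open>Integration term by term is justified by the uniform convergence of the partial sums.\<close>
lemma fourier_coeff_trig_series:
  assumes e: "(\<lambda>n. norm (e n)) summable_on UNIV"
  shows "fourier_coeff (trig_series e) m = e m"
proof -
  define h where "h n x = e n * exp (\<i> * of_int (n - m) * of_real x)" for n x
  have h: "h n x = e n * exp (\<i> * of_int n * of_real x) * exp (- (\<i> * of_int m * of_real x))" for n x
    by (simp add: h_def algebra_simps flip: exp_add)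
  have "uniform_limit {0..2*pi} (\<lambda>X x. \<Sum>n\<in>X. h n x)
      (\<lambda>x. trig_series e x * exp (- (\<i> * of_int m * of_real x))) (finite_subsets_at_top UNIV)"
  proof (rule Weierstrass_m_test_general'[where M="\<lambda>n. norm (e n)"])
    show "norm (h n x) \<le> norm (e n)" for n x
      by (simp add: h_def norm_mult)
    show "((\<lambda>n. h n x) has_sum trig_series e x * exp (- (\<i> * of_int m * of_real x))) UNIV" for x
      unfolding h by (rule has_sum_cmult_left[OF has_sum_trig_series[OF e]])
  qed (use e in auto)
  then obtain I J where I: "\<And>X. ((\<lambda>x. \<Sum>n\<in>X. h n x) has_integral I X) {0..2*pi}"
    and J: "((\<lambda>x. trig_series e x * exp (- (\<i> * of_int m * of_real x))) has_integral J) {0..2*pi}"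
    and lim: "(I \<longlongrightarrow> J) (finite_subsets_at_top UNIV)"
    by (rule uniform_limit_integral) (auto simp: h_def intro!: continuous_intros)
  have "I X = of_real (2*pi) * e m" if "finite X" "m \<in> X" for X
  proof -
    have "((\<lambda>x. \<Sum>n\<in>X. h n x) has_integral
        (\<Sum>n\<in>X. e n * (if n - m = 0 then of_real (2*pi) else 0))) {0..2*pi}"
      unfolding h_def by (intro has_integral_sum that(1) has_integral_mult_right has_integral_exp_i_int_times)
    also have "(\<Sum>n\<in>X. e n * (if n - m = 0 then of_real (2*pi) else 0)) = of_real (2*pi) * e m"
      using that by (simp add: if_distrib sum.delta' cong: if_cong)
    finally show ?thesis
      using I[of X] by (rule has_integral_unique[symmetric])
  qed
  then have "eventually (\<lambda>X. I X = of_real (2*pi) * e m) (finite_subsets_at_top UNIV)"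
    unfolding eventually_finite_subsets_at_top by (intro exI[of _ "{m}"]) auto
  then have "(I \<longlongrightarrow> of_real (2*pi) * e m) (finite_subsets_at_top UNIV)"
    by (rule tendsto_eventually)
  then have "J = of_real (2*pi) * e m"
    using lim tendsto_unique by (metis finite_subsets_at_top_neq_bot)
  then show ?thesis
    using J by (simp add: fourier_coeff_def integral_unique)
qed

lemma in_wiener_trig_series:
  assumes "0 \<le> s" "0 \<le> lam" "coeff_summable s lam e"
  shows "in_wiener s lam (trig_series e)" "wiener_norm s lam (trig_series e) = coeff_norm s lam e"
proof -
  have e: "(\<lambda>n. norm (e n)) summable_on UNIV"
    by (rule coeff_summable_abs_summable[OF assms])
  then have coeff: "fourier_coeff (trig_series e) = e"
    by (simp add: fourier_coeff_trig_series fun_eq_iff)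
  have "trig_series e absolutely_integrable_on {0..2*pi}"
    by (rule absolutely_integrable_continuous_real)
       (rule continuous_on_subset[OF continuous_on_trig_series[OF e]], simp)
  then show "in_wiener s lam (trig_series e)"
    using assms(3) by (simp add: in_wiener_iff coeff)
  show "wiener_norm s lam (trig_series e) = coeff_norm s lam e"
    by (simp add: wiener_norm_eq_coeff_norm coeff)
qed

section \<open>Real part and derivative\<close>

definition hermitian_part :: "(int \<Rightarrow> complex) \<Rightarrow> int \<Rightarrow> complex" where
  "hermitian_part d n = (d n + cnj (d (- n))) / 2"

text \<open>Taking the real part of a trigonometric series symmetrises its coefficients; this spares
  us the Hermitian symmetry of the Fourier coefficients of a real function.\<close>
lemma Re_trig_series:
  assumes "(\<lambda>n. norm (d n)) summable_on UNIV"
  shows "complex_of_real (Re (trig_series d x)) = trig_series (hermitian_part d) x"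
proof -
  define E where "E n = exp (\<i> * of_int n * of_real x)" for n
  have cnj_E: "cnj (E n) = E (- n)" for n
    by (simp add: E_def exp_cnj)
  have d: "(\<lambda>n. d n * E n) summable_on UNIV"
    using abs_summable_summable[OF abs_summable_trig_series_terms[OF assms]] by (simp add: E_def)
  have "(\<lambda>n. cnj (d n * E n)) summable_on UNIV"
    by (rule summable_on_cnj_iff[THEN iffD2, OF d])
  then have "(\<lambda>n. cnj (d (- n) * E (- n))) summable_on UNIV"
    using summable_on_reindex_bij_betw[OF bij_uminus, of "\<lambda>n. cnj (d n * E n)"] by (simp add: o_def)
  then have d': "(\<lambda>n. cnj (d (- n)) * E n) summable_on UNIV"
    by (simp add: cnj_E)
  have "cnj (trig_series d x) = (\<Sum>\<^sub>\<infinity>n. cnj (d n * E n))"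
    unfolding trig_series_def E_def by (rule infsum_cnj[symmetric])
  also have "\<dots> = (\<Sum>\<^sub>\<infinity>n. cnj (d (- n) * E (- n)))"
    by (rule infsum_reindex_bij_betw[OF bij_uminus, symmetric])
  also have "\<dots> = (\<Sum>\<^sub>\<infinity>n. cnj (d (- n)) * E n)"
    by (simp add: cnj_E)
  finally have cnj_series: "cnj (trig_series d x) = (\<Sum>\<^sub>\<infinity>n. cnj (d (- n)) * E n)" .
  have series: "trig_series d x = (\<Sum>\<^sub>\<infinity>n. d n * E n)"
    by (simp add: trig_series_def E_def)
  have "complex_of_real (Re (trig_series d x)) = (trig_series d x + cnj (trig_series d x)) / 2"
    by (simp add: complex_add_cnj)
  also have "\<dots> = ((\<Sum>\<^sub>\<infinity>n. d n * E n) + (\<Sum>\<^sub>\<infinity>n. cnj (d (- n)) * E n)) / 2"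
    by (simp only: cnj_series, simp only: series)
  also have "\<dots> = (\<Sum>\<^sub>\<infinity>n. d n * E n + cnj (d (- n)) * E n) / 2"
    by (simp add: infsum_add[OF d d'])
  also have "\<dots> = (\<Sum>\<^sub>\<infinity>n. (d n * E n + cnj (d (- n)) * E n) / 2)"
    by (simp only: divide_inverse infsum_cmult_left')
  also have "\<dots> = trig_series (hermitian_part d) x"
    unfolding trig_series_def hermitian_part_def E_def by (simp add: algebra_simps add_divide_distrib)
  finally show ?thesis .
qed

lemma
  assumes "coeff_summable s lam d"
  shows coeff_summable_hermitian_part: "coeff_summable s lam (hermitian_part d)"
    and coeff_norm_hermitian_part_le: "coeff_norm s lam (hermitian_part d) \<le> coeff_norm s lam d"
proof -
  define W where "W = wiener_weight s lam"
  have d: "(\<lambda>n. W n * norm (d n)) summable_on UNIV"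
    using assms by (simp add: coeff_summable_def W_def)
  have d': "(\<lambda>n. W n * norm (d (- n))) summable_on UNIV"
    using summable_on_reindex_bij_betw[OF bij_uminus, of "\<lambda>n. W n * norm (d n)"] d by (simp add: W_def o_def)
  have sum_d': "(\<Sum>\<^sub>\<infinity>n. W n * norm (d (- n))) = (\<Sum>\<^sub>\<infinity>n. W n * norm (d n))"
    using infsum_reindex_bij_betw[OF bij_uminus, of "\<lambda>n. W n * norm (d n)"] by (simp add: W_def o_def)
  have both: "(\<lambda>n. 1/2 * (W n * norm (d n) + W n * norm (d (- n)))) summable_on UNIV"
    by (rule summable_on_cmult_right[OF summable_on_add[OF d d']])
  have pointwise: "W n * norm (hermitian_part d n) \<le> 1/2 * (W n * norm (d n) + W n * norm (d (- n)))"
    for n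
  proof -
    have "norm (hermitian_part d n) \<le> (norm (d n) + norm (d (- n))) / 2"
      using norm_triangle_ineq[of "d n" "cnj (d (- n))"] by (simp add: hermitian_part_def norm_divide)
    then have "W n * norm (hermitian_part d n) \<le> W n * ((norm (d n) + norm (d (- n))) / 2)"
      by (rule mult_left_mono) (simp add: W_def wiener_weight_nonneg)
    then show ?thesis
      by (simp add: algebra_simps)
  qed
  have summable: "(\<lambda>n. W n * norm (hermitian_part d n)) summable_on UNIV"
    by (rule summable_on_comparison_test[OF both pointwise]) (simp add: W_def wiener_weight_nonneg)
  then show "coeff_summable s lam (hermitian_part d)"
    by (simp add: coeff_summable_def W_def)
  have "coeff_norm s lam (hermitian_part d) \<le> (\<Sum>\<^sub>\<infinity>n. 1/2 * (W n * norm (d n) + W n * norm (d (- n))))"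
    unfolding coeff_norm_def W_def[symmetric] by (rule infsum_mono[OF summable both pointwise])
  also have "\<dots> = 1/2 * ((\<Sum>\<^sub>\<infinity>n. W n * norm (d n)) + (\<Sum>\<^sub>\<infinity>n. W n * norm (d (- n))))"
    by (simp only: infsum_cmult_right' infsum_add[OF d d'])
  also have "\<dots> = coeff_norm s lam d"
    by (simp only: sum_d') (simp add: coeff_norm_def W_def)
  finally show "coeff_norm s lam (hermitian_part d) \<le> coeff_norm s lam d" .
qed

definition deriv_coeffs :: "(int \<Rightarrow> complex) \<Rightarrow> int \<Rightarrow> complex" where
  "deriv_coeffs c n = \<i> * of_int n * c n"

lemma fourier_deriv_eq_trig_series: "fourier_deriv f = trig_series (deriv_coeffs (fourier_coeff f))"
  by (simp add: fun_eq_iff fourier_deriv_def trig_series_def deriv_coeffs_def)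

lemma
  assumes "coeff_summable (t + 1) lam c"
  shows coeff_summable_deriv_coeffs: "coeff_summable t lam (deriv_coeffs c)"
    and coeff_norm_deriv_coeffs_le: "coeff_norm t lam (deriv_coeffs c) \<le> coeff_norm (t + 1) lam c"
proof -
  have c: "(\<lambda>n. wiener_weight (t + 1) lam n * norm (c n)) summable_on UNIV"
    using assms by (simp add: coeff_summable_def)
  have pointwise: "wiener_weight t lam n * norm (deriv_coeffs c n) \<le> wiener_weight (t + 1) lam n * norm (c n)"
    for n
  proof -
    have "norm (deriv_coeffs c n) \<le> (1 + \<bar>real_of_int n\<bar>) * norm (c n)"
      by (simp add: deriv_coeffs_def norm_mult mult_right_mono)
    then have "wiener_weight t lam n * norm (deriv_coeffs c n) \<le>
        wiener_weight t lam n * ((1 + \<bar>real_of_int n\<bar>) * norm (c n))"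
      by (rule mult_left_mono) (rule wiener_weight_nonneg)
    then show ?thesis
      by (simp add: wiener_weight_add_one mult_ac)
  qed
  have summable: "(\<lambda>n. wiener_weight t lam n * norm (deriv_coeffs c n)) summable_on UNIV"
    by (rule summable_on_comparison_test[OF c pointwise]) (simp add: wiener_weight_nonneg)
  then show "coeff_summable t lam (deriv_coeffs c)"
    by (simp add: coeff_summable_def)
  show "coeff_norm t lam (deriv_coeffs c) \<le> coeff_norm (t + 1) lam c"
    unfolding coeff_norm_def by (rule infsum_mono[OF summable c pointwise])
qed

section \<open>Series of coefficient sequences\<close>

lemma
  fixes f :: "'b \<Rightarrow> int \<Rightarrow> complex"
  assumes "\<And>j. coeff_summable s lam (f j)" "(\<lambda>j. coeff_norm s lam (f j)) summable_on UNIV"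
  shows weighted_coeff_family_summable:
      "(\<lambda>(n, j). wiener_weight s lam n * norm (f j n)) summable_on UNIV \<times> UNIV"
    and weighted_coeff_family_infsum:
      "(\<Sum>\<^sub>\<infinity>n. \<Sum>\<^sub>\<infinity>j. wiener_weight s lam n * norm (f j n)) = (\<Sum>\<^sub>\<infinity>j. coeff_norm s lam (f j))"
proof -
  define D where "D j n = wiener_weight s lam n * norm (f j n)" for j n
  have rows: "((\<lambda>n. D j n) has_sum coeff_norm s lam (f j)) UNIV" for j
    using assms(1) by (simp add: D_def coeff_norm_def coeff_summable_def)
  have "(\<lambda>(j, n). D j n) summable_on UNIV \<times> UNIV"
    using summable_on_SigmaI[where f="\<lambda>(j, n). D j n" and A=UNIV and B="\<lambda>_. UNIV", OF _ assms(2)]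
      rows by (simp add: D_def wiener_weight_nonneg case_prod_unfold)
  then have swapped: "(\<lambda>(n, j). D j n) summable_on UNIV \<times> UNIV"
    using summable_on_swap[of "\<lambda>(j, n). D j n" UNIV UNIV] by (simp add: case_prod_unfold)
  then show "(\<lambda>(n, j). wiener_weight s lam n * norm (f j n)) summable_on UNIV \<times> UNIV"
    by (simp add: D_def)
  have "(\<Sum>\<^sub>\<infinity>n. \<Sum>\<^sub>\<infinity>j. D j n) = (\<Sum>\<^sub>\<infinity>j. \<Sum>\<^sub>\<infinity>n. D j n)"
    by (rule infsum_swap_banach) (use swapped in simp)
  also have "\<dots> = (\<Sum>\<^sub>\<infinity>j. coeff_norm s lam (f j))"
    by (rule infsum_cong) (rule infsumI[OF rows])
  finally show "(\<Sum>\<^sub>\<infinity>n. \<Sum>\<^sub>\<infinity>j. wiener_weight s lam n * norm (f j n)) = (\<Sum>\<^sub>\<infinity>j. coeff_norm s lam (f j))"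
    by (simp add: D_def)
qed

lemma
  fixes f :: "'b \<Rightarrow> int \<Rightarrow> complex"
  assumes "0 \<le> s" "0 \<le> lam" "\<And>j. coeff_summable s lam (f j)"
    "(\<lambda>j. coeff_norm s lam (f j)) summable_on UNIV"
  shows coeff_summable_infsum: "coeff_summable s lam (\<lambda>n. \<Sum>\<^sub>\<infinity>j. f j n)"
    and coeff_norm_infsum_le: "coeff_norm s lam (\<lambda>n. \<Sum>\<^sub>\<infinity>j. f j n) \<le> (\<Sum>\<^sub>\<infinity>j. coeff_norm s lam (f j))"
proof -
  define W where "W = wiener_weight s lam"
  note family = weighted_coeff_family_summable[OF assms(3,4), folded W_def]
  define h where "h = (\<lambda>n. \<Sum>\<^sub>\<infinity>j. W n * norm (f j n))"
  have h: "h summable_on UNIV"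
    unfolding h_def using summable_on_Sigma_banach[OF family] by simp
  have column: "(\<lambda>j. W n * norm (f j n)) summable_on UNIV" for n
    using summable_on_SigmaD1[of "\<lambda>n j. W n * norm (f j n)" UNIV "\<lambda>_. UNIV", OF _ UNIV_I] family
    by simp
  have pointwise: "W n * norm (\<Sum>\<^sub>\<infinity>j. f j n) \<le> h n" for n
  proof -
    have "(\<lambda>j. norm (f j n)) summable_on UNIV"
      using column[of n] by (rule summable_on_comparison_test)
        (simp_all add: W_def one_le_wiener_weight[OF assms(1,2)] mult_le_cancel_right1)
    then have "norm (\<Sum>\<^sub>\<infinity>j. f j n) \<le> (\<Sum>\<^sub>\<infinity>j. norm (f j n))"
      by (rule norm_infsum_bound)
    then have "W n * norm (\<Sum>\<^sub>\<infinity>j. f j n) \<le> W n * (\<Sum>\<^sub>\<infinity>j. norm (f j n))"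
      by (rule mult_left_mono) (simp add: W_def wiener_weight_nonneg)
    then show ?thesis
      by (simp add: h_def infsum_cmult_right')
  qed
  have summable: "(\<lambda>n. W n * norm (\<Sum>\<^sub>\<infinity>j. f j n)) summable_on UNIV"
    by (rule summable_on_comparison_test[OF h pointwise]) (simp add: W_def wiener_weight_nonneg)
  then show "coeff_summable s lam (\<lambda>n. \<Sum>\<^sub>\<infinity>j. f j n)"
    by (simp add: coeff_summable_def W_def)
  have "coeff_norm s lam (\<lambda>n. \<Sum>\<^sub>\<infinity>j. f j n) \<le> infsum h UNIV"
    unfolding coeff_norm_def W_def[symmetric] by (rule infsum_mono[OF summable h pointwise])
  also have "\<dots> = (\<Sum>\<^sub>\<infinity>j. coeff_norm s lam (f j))"
    using weighted_coeff_family_infsum[OF assms(3,4)] by (simp add: h_def W_def)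
  finally show "coeff_norm s lam (\<lambda>n. \<Sum>\<^sub>\<infinity>j. f j n) \<le> (\<Sum>\<^sub>\<infinity>j. coeff_norm s lam (f j))" .
qed

lemma trig_series_infsum:
  fixes f :: "'b \<Rightarrow> int \<Rightarrow> complex"
  assumes "0 \<le> s" "0 \<le> lam" "\<And>j. coeff_summable s lam (f j)"
    "(\<lambda>j. coeff_norm s lam (f j)) summable_on UNIV"
  shows "trig_series (\<lambda>n. \<Sum>\<^sub>\<infinity>j. f j n) x = (\<Sum>\<^sub>\<infinity>j. trig_series (f j) x)"
proof -
  define G where "G n j = f j n * exp (\<i> * of_int n * of_real x)" for n j
  have "norm (G n j) \<le> wiener_weight s lam n * norm (f j n)" for n j
    using one_le_wiener_weight[OF assms(1,2), of n] by (simp add: G_def norm_mult mult_le_cancel_right1)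
  then have "(\<lambda>p. norm ((\<lambda>(n, j). G n j) p)) summable_on UNIV \<times> UNIV"
    by (intro Infinite_Sum.abs_summable_on_comparison_test'[OF weighted_coeff_family_summable[OF assms(3,4)]])
      auto
  then have G: "(\<lambda>(n, j). G n j) summable_on UNIV \<times> UNIV"
    by (rule abs_summable_summable)
  have "trig_series (\<lambda>n. \<Sum>\<^sub>\<infinity>j. f j n) x = (\<Sum>\<^sub>\<infinity>n. \<Sum>\<^sub>\<infinity>j. G n j)"
    unfolding trig_series_def G_def by (simp add: infsum_cmult_left')
  also have "\<dots> = (\<Sum>\<^sub>\<infinity>j. \<Sum>\<^sub>\<infinity>n. G n j)"
    by (rule infsum_swap_banach[OF G])
  also have "\<dots> = (\<Sum>\<^sub>\<infinity>j. trig_series (f j) x)"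
    by (simp add: G_def trig_series_def)
  finally show ?thesis .
qed

section \<open>The coefficients of \<open>F\<close> composed with a trigonometric series\<close>

lemma abs_prod_minus_le_fact:
  fixes a :: real
  assumes "0 \<le> a" "a \<le> 2"
  shows "\<bar>\<Prod>i = 0..<k. - a - of_nat i\<bar> \<le> fact (Suc k)"
proof (induction k)
  case (Suc k)
  have "\<bar>\<Prod>i = 0..<Suc k. - a - of_nat i\<bar> = \<bar>\<Prod>i = 0..<k. - a - of_nat i\<bar> * (a + of_nat k)"
    using assms by (simp add: abs_mult)
  also have "\<dots> \<le> fact (Suc k) * (of_nat k + 2)"
    using assms by (intro mult_mono Suc) auto
  also have "\<dots> = fact (Suc (Suc k))"
    by (simp add: algebra_simps)
  finally show ?case .
qed simp

lemma abs_gbinomial_uminus_le: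
  fixes a :: real
  assumes "0 \<le> a" "a \<le> 2"
  shows "\<bar>(- a) gchoose k\<bar> \<le> real k + 1"
proof -
  have "\<bar>(- a) gchoose k\<bar> * fact k = \<bar>\<Prod>i = 0..<k. - a - of_nat i\<bar>"
    by (metis gbinomial_mult_fact' abs_mult abs_of_nonneg fact_ge_zero)
  also have "\<dots> \<le> fact (Suc k)"
    by (rule abs_prod_minus_le_fact[OF assms])
  also have "\<dots> = (real k + 1) * fact k"
    by simp
  finally show ?thesis
    by (simp add: mult_le_cancel_right fact_gt_zero)
qed

lemma F_fun_has_sum:
  fixes y :: real
  assumes "\<bar>y\<bar> < 1"
  shows "((\<lambda>j. ((-3/2) gchoose Suc j) * y ^ (2 * Suc j)) has_sum F_fun y) UNIV"
proof -
  have y2: "\<bar>y\<^sup>2\<bar> < 1"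
    using assms by (simp add: abs_square_less_1)
  define z where "z = (y\<^sup>2 + 1) / 2"
  have "\<bar>z\<bar> < 1" "norm (y\<^sup>2) < norm z"
    using y2 by (auto simp: z_def)
  then have "summable (\<lambda>n. norm (((-3/2) gchoose n) * (y\<^sup>2) ^ n))"
    using powser_insidea[OF sums_summable[OF gen_binomial_real]] by blast
  then have abs: "summable (\<lambda>j. norm (((-3/2) gchoose Suc j) * (y\<^sup>2) ^ Suc j))"
    by (rule summable_ignore_initial_segment[where k=1, simplified])
  have "(1 + y\<^sup>2) powr (-3/2) = F_fun y + 1"
    by (simp add: F_fun_def powr_minus_divide)
  then have "(\<lambda>n. ((-3/2) gchoose n) * (y\<^sup>2) ^ n) sums (F_fun y + 1)"
    using gen_binomial_real[OF y2, of "-3/2"] by simp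
  then have "(\<lambda>j. ((-3/2) gchoose Suc j) * (y\<^sup>2) ^ Suc j) sums F_fun y"
    using sums_Suc_iff[of "\<lambda>n. ((-3/2) gchoose n) * (y\<^sup>2) ^ n"] by simp
  then have "((\<lambda>j. ((-3/2) gchoose Suc j) * (y\<^sup>2) ^ Suc j) has_sum F_fun y) UNIV"
    by (rule norm_summable_imp_has_sum[OF abs])
  then show ?thesis
    by (simp only: power_mult)
qed

lemma mult_le_four_power: "(real j + 2) * (2 * real j + 2) \<le> 4 ^ (j + 1)"
proof (induction j)
  case (Suc j)
  have "(real (Suc j) + 2) * (2 * real (Suc j) + 2) \<le> 4 * ((real j + 2) * (2 * real j + 2))"
    by (simp add: algebra_simps)
  also have "\<dots> \<le> 4 * 4 ^ (j + 1)"
    using Suc by simp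
  finally show ?case
    by simp
qed simp

text \<open>The \<open>j\<close>-th term of the estimate: a binomial coefficient of size at most \<open>j + 2\<close>
  against the \<open>(2j + 2)\<close>-nd convolution power.\<close>
lemma binomial_term_le:
  fixes Q \<rho> t A :: real
  assumes "0 \<le> Q" "Q \<le> real j + 2" "0 \<le> \<rho>" "9 * \<rho> \<le> t" "t \<le> 1" "0 \<le> A"
  shows "Q * (real (Suc (2 * j + 1)) * \<rho> ^ (2 * j + 1) * A) \<le> (1/2) ^ Suc j * (t * A)"
proof -
  have t: "0 \<le> t"
    using assms by linarith
  have "Q * real (Suc (2 * j + 1)) = Q * (2 * real j + 2)"
    by simp
  also have "\<dots> \<le> (real j + 2) * (2 * real j + 2)"
    using assms by (intro mult_right_mono) auto
  also have "\<dots> \<le> 4 ^ (j + 1)"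
    by (rule mult_le_four_power)
  finally have Q: "Q * real (Suc (2 * j + 1)) \<le> 4 ^ (j + 1)" .
  have "\<rho> ^ (2 * j + 1) \<le> (t / 9) ^ (2 * j + 1)"
    using assms by (intro power_mono) auto
  also have "\<dots> = t * t ^ (2 * j) / 9 ^ (2 * j + 1)"
    by (simp add: power_divide)
  also have "\<dots> \<le> t / 9 ^ (2 * j + 1)"
    using assms t by (intro divide_right_mono mult_left_le power_le_one) auto
  finally have \<rho>: "\<rho> ^ (2 * j + 1) \<le> t / 9 ^ (2 * j + 1)" .
  have "Q * (real (Suc (2 * j + 1)) * \<rho> ^ (2 * j + 1) * A) =
      (Q * real (Suc (2 * j + 1))) * \<rho> ^ (2 * j + 1) * A"
    by (simp add: mult_ac)
  also have "\<dots> \<le> 4 ^ (j + 1) * (t / 9 ^ (2 * j + 1)) * A"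
    using assms Q \<rho> by (intro mult_right_mono mult_mono) auto
  also have "\<dots> = (4 / 9) * (4 / 81) ^ j * (t * A)"
    by (simp add: power_add power_mult power_divide)
  also have "\<dots> \<le> (1 / 2) * (1 / 2) ^ j * (t * A)"
    using assms t by (intro mult_right_mono mult_mono power_mono) auto
  finally show ?thesis
    by simp
qed

lemma nine_two_powr_le_K_const:
  assumes "0 \<le> s"
  shows "9 * 2 powr s \<le> 36 * (K_const s)\<^sup>2"
proof -
  consider "s = 0" | "0 < s" "s \<le> 1" | "1 < s"
    using assms by linarith
  then show ?thesis
  proof cases
    case 1
    then show ?thesis
      by (simp add: K_const_def powr_minus_divide power2_eq_square)
  next
    case 2
    then have "2 powr s \<le> 2 powr 1"
      by (intro powr_mono) auto
    then show ?thesis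
      using 2 by (simp add: K_const_def)
  next
    case 3
    have "1 \<le> 2 powr s"
      using assms by (simp add: ge_one_powr_ge_zero)
    then have "9 * 2 powr s \<le> 9 * (2 powr s * 2 powr s)"
      by simp
    also have "\<dots> = 36 * (2 powr (s - 1))\<^sup>2"
      by (simp add: powr_diff power2_eq_square)
    finally show ?thesis
      using 3 by (simp add: K_const_def)
  qed
qed

lemma nine_two_powr_mult_le_one:
  assumes "0 \<le> s" "0 \<le> x" "36 * (K_const s)\<^sup>2 * x \<le> 1"
  shows "9 * 2 powr s * x \<le> 1"
  using mult_right_mono[OF nine_two_powr_le_K_const[OF assms(1)] assms(2)] assms(3) by linarith

lemma has_sum_half_powers: "((\<lambda>j. (1/2) ^ Suc j * C) has_sum (C :: real)) UNIV"
proof -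
  have "((\<lambda>j. (1/2::real) ^ Suc j) has_sum 1) UNIV"
    by (rule norm_summable_imp_has_sum) (use power_half_series sums_summable in auto)
  from has_sum_cmult_left[OF this, of C] show ?thesis
    by simp
qed

lemma
  assumes "0 \<le> s" "0 \<le> lam" "coeff_summable 0 lam a" "coeff_summable s lam a"
    "9 * 2 powr s * coeff_norm 0 lam a \<le> t" "t \<le> 1"
  defines "f \<equiv> \<lambda>j n. complex_of_real ((-3/2) gchoose Suc j) * conv_pow a (2 * j + 1) n"
  shows summable_coeff_norm_binomial_terms: "(\<lambda>j. coeff_norm s lam (f j)) summable_on UNIV"
    and infsum_coeff_norm_binomial_terms_le: "(\<Sum>\<^sub>\<infinity>j. coeff_norm s lam (f j)) \<le> t * coeff_norm s lam a"
proof -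
  define \<rho> where "\<rho> = 2 powr s * coeff_norm 0 lam a"
  have \<rho>: "0 \<le> \<rho>" "9 * \<rho> \<le> t"
    using assms(5) by (simp_all add: \<rho>_def coeff_norm_nonneg mult.assoc)
  have bound: "coeff_norm s lam (f j) \<le> (1/2) ^ Suc j * (t * coeff_norm s lam a)" for j
  proof -
    define Q where "Q = \<bar>(-3/2 :: real) gchoose Suc j\<bar>"
    have Q: "0 \<le> Q" "Q \<le> real j + 2"
      using abs_gbinomial_uminus_le[of "3/2" "Suc j"] by (simp_all add: Q_def)
    have "Q * coeff_norm s lam (conv_pow a (2 * j + 1)) \<le>
        Q * (real (Suc (2 * j + 1)) * \<rho> ^ (2 * j + 1) * coeff_norm s lam a)"
      unfolding \<rho>_def by (rule mult_left_mono[OF coeff_norm_conv_pow_le[OF assms(1-4)] Q(1)])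
    also have "\<dots> \<le> (1/2) ^ Suc j * (t * coeff_norm s lam a)"
      by (rule binomial_term_le[OF Q \<rho> assms(6) coeff_norm_nonneg])
    finally show ?thesis
      by (simp add: f_def coeff_norm_cmult Q_def)
  qed
  note geometric = has_sum_imp_summable[OF has_sum_half_powers]
  show summable: "(\<lambda>j. coeff_norm s lam (f j)) summable_on UNIV"
    by (rule summable_on_comparison_test[OF geometric bound]) (rule coeff_norm_nonneg)
  show "(\<Sum>\<^sub>\<infinity>j. coeff_norm s lam (f j)) \<le> t * coeff_norm s lam a"
    using infsum_mono[OF summable geometric bound] infsumI[OF has_sum_half_powers] by simp
qed

lemma in_wiener_F_fun_trig_series:
  assumes "0 \<le> s" "0 \<le> lam" "coeff_summable 0 lam a" "coeff_summable s lam a"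
    and y: "\<And>x. trig_series a x = complex_of_real (y x)"
    and small: "9 * 2 powr s * coeff_norm 0 lam a \<le> t" "t \<le> 1"
  shows "in_wiener s lam (\<lambda>x. complex_of_real (F_fun (y x)))"
    and "wiener_norm s lam (\<lambda>x. complex_of_real (F_fun (y x))) \<le> t * coeff_norm s lam a"
proof -
  define g where "g j = (-3/2 :: real) gchoose Suc j" for j
  define f where "f j = (\<lambda>n. complex_of_real (g j) * conv_pow a (2 * j + 1) n)" for j
  have f: "coeff_summable s lam (f j)" for j
    unfolding f_def by (intro coeff_summable_cmult coeff_summable_conv_pow assms(1-4))
  note summable = summable_coeff_norm_binomial_terms[OF assms(1-4) small, folded g_def, folded f_def]
  note sum_le = infsum_coeff_norm_binomial_terms_le[OF assms(1-4) small, folded g_def, folded f_def]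
  have "trig_series (\<lambda>n. \<Sum>\<^sub>\<infinity>j. f j n) x = complex_of_real (F_fun (y x))" for x
  proof -
    have "\<bar>y x\<bar> \<le> coeff_norm 0 lam a"
      using norm_trig_series_le[OF order_refl assms(2,3), of x] by (simp add: y)
    also have "\<dots> \<le> 2 powr s * coeff_norm 0 lam a"
      using assms(1) coeff_norm_nonneg[of 0 lam a] ge_one_powr_ge_zero[of 2 s]
      by (simp add: mult_le_cancel_right1)
    finally have "\<bar>y x\<bar> < 1"
      using small by (simp add: mult.assoc)
    note F = has_sum_of_real[OF F_fun_has_sum[OF this], where 'a=complex]
    have "trig_series (f j) x = complex_of_real (g j * y x ^ (2 * Suc j))" for j
    proof -
      have "trig_series (f j) x = complex_of_real (g j) * trig_series (conv_pow a (2 * j + 1)) x"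
        by (simp only: f_def trig_series_cmult)
      then show ?thesis
        by (simp only: trig_series_conv_pow[OF assms(2,3)] y) simp
    qed
    then show ?thesis
      using trig_series_infsum[OF assms(1,2) f summable] F by (simp add: g_def infsumI)
  qed
  then have F: "(\<lambda>x. complex_of_real (F_fun (y x))) = trig_series (\<lambda>n. \<Sum>\<^sub>\<infinity>j. f j n)"
    by (simp add: fun_eq_iff)
  note e = coeff_summable_infsum[OF assms(1,2) f summable]
  show "in_wiener s lam (\<lambda>x. complex_of_real (F_fun (y x)))"
    unfolding F by (rule in_wiener_trig_series[OF assms(1,2) e])
  show "wiener_norm s lam (\<lambda>x. complex_of_real (F_fun (y x))) \<le> t * coeff_norm s lam a"
    unfolding F in_wiener_trig_series(2)[OF assms(1,2) e]
    using coeff_norm_infsum_le[OF assms(1,2) f summable] sum_le by linarith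
qed

lemma
  assumes "0 \<le> r" "coeff_summable (t + 1) lam c"
  shows coeff_summable_scaled_real_deriv:
      "coeff_summable t lam (\<lambda>n. complex_of_real r * hermitian_part (deriv_coeffs c) n)"
    and coeff_norm_scaled_real_deriv_le:
      "coeff_norm t lam (\<lambda>n. complex_of_real r * hermitian_part (deriv_coeffs c) n)
        \<le> r * coeff_norm (t + 1) lam c"
proof -
  note d = coeff_summable_deriv_coeffs[OF assms(2)] coeff_norm_deriv_coeffs_le[OF assms(2)]
  show "coeff_summable t lam (\<lambda>n. complex_of_real r * hermitian_part (deriv_coeffs c) n)"
    by (intro coeff_summable_cmult coeff_summable_hermitian_part d(1))
  have "coeff_norm t lam (hermitian_part (deriv_coeffs c)) \<le> coeff_norm (t + 1) lam c"
    using coeff_norm_hermitian_part_le[OF d(1)] d(2) by (rule order_trans)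
  then show "coeff_norm t lam (\<lambda>n. complex_of_real r * hermitian_part (deriv_coeffs c) n)
      \<le> r * coeff_norm (t + 1) lam c"
    using assms(1) by (simp add: coeff_norm_cmult mult_left_mono)
qed

lemma Re_fourier_deriv:
  assumes "0 \<le> lam" "coeff_summable 1 lam (fourier_coeff f)"
  shows "complex_of_real (Re (fourier_deriv f x)) =
    trig_series (hermitian_part (deriv_coeffs (fourier_coeff f))) x"
proof -
  have "coeff_summable 0 lam (deriv_coeffs (fourier_coeff f))"
    using coeff_summable_deriv_coeffs[of 0] assms(2) by simp
  then show ?thesis
    unfolding fourier_deriv_eq_trig_series
    by (intro Re_trig_series coeff_summable_abs_summable[OF order_refl assms(1)])
qed

theorem proposition5p4:
  fixes \<epsilon> \<mu> s lam :: real and \<zeta> :: "real \<Rightarrow> real"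
  assumes "0 < \<epsilon>" "\<epsilon> \<le> 1" "0 < \<mu>" "\<mu> < 1" "0 \<le> s" "0 \<le> lam"
    and "in_wiener (s + 1) lam (\<lambda>x. complex_of_real (\<zeta> x))"
    and "36 * (K_const s)^2 * \<epsilon> * wiener_norm 1 lam (\<lambda>x. complex_of_real (\<zeta> x)) \<le> 1"
  shows "in_wiener s lam (\<lambda>x. complex_of_real (F_fun (\<epsilon> * sqrt \<mu> * Re (fourier_deriv (\<lambda>y. complex_of_real (\<zeta> y)) x))))
    \<and> wiener_norm s lam (\<lambda>x. complex_of_real (F_fun (\<epsilon> * sqrt \<mu> * Re (fourier_deriv (\<lambda>y. complex_of_real (\<zeta> y)) x))))
        \<le> \<epsilon> * \<mu> * wiener_norm (s + 1) lam (\<lambda>x. complex_of_real (\<zeta> x))"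
proof -
  define c where "c = fourier_coeff (\<lambda>x. complex_of_real (\<zeta> x))"
  define a where "a = (\<lambda>n. complex_of_real (\<epsilon> * sqrt \<mu>) * hermitian_part (deriv_coeffs c) n)"
  have c: "coeff_summable (t + 1) lam c" if "t \<le> s" for t
    using coeff_summable_mono[of "t + 1" "s + 1"] assms(7) that by (simp add: in_wiener_iff c_def)
  have "0 \<le> \<epsilon> * sqrt \<mu>"
    using assms(1,3) by simp
  note a = coeff_summable_scaled_real_deriv[OF this c, folded a_def]
    coeff_norm_scaled_real_deriv_le[OF this c, folded a_def]
  have y: "trig_series a x = complex_of_real (\<epsilon> * sqrt \<mu> * Re (fourier_deriv (\<lambda>y. complex_of_real (\<zeta> y)) x))"
    for x
    using Re_fourier_deriv[OF assms(6) c[OF assms(5), simplified, unfolded c_def]]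
    by (simp add: a_def c_def trig_series_cmult)
  have K: "9 * 2 powr s * (\<epsilon> * coeff_norm 1 lam c) \<le> 1"
    using assms(1,5,8) by (intro nine_two_powr_mult_le_one)
      (simp_all add: c_def wiener_norm_eq_coeff_norm coeff_norm_nonneg mult.assoc)
  have "9 * 2 powr s * coeff_norm 0 lam a \<le> sqrt \<mu> * (9 * 2 powr s * (\<epsilon> * coeff_norm 1 lam c))"
    using a(2)[OF assms(5)] assms(1,3,5) by (simp add: mult_ac mult_left_mono)
  also have "\<dots> \<le> sqrt \<mu>"
    using K assms(3) by (intro mult_left_le) auto
  finally have small: "9 * 2 powr s * coeff_norm 0 lam a \<le> sqrt \<mu>" .
  have "sqrt \<mu> * coeff_norm s lam a \<le> sqrt \<mu> * (\<epsilon> * sqrt \<mu> * coeff_norm (s + 1) lam c)"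
    using a(2)[OF order_refl] assms(3) by (intro mult_left_mono) auto
  also have "\<dots> = \<epsilon> * \<mu> * coeff_norm (s + 1) lam c"
    using assms(3) by (simp add: real_sqrt_mult_self mult_ac)
  finally have "sqrt \<mu> * coeff_norm s lam a \<le> \<epsilon> * \<mu> * coeff_norm (s + 1) lam c" .
  then show ?thesis
    using in_wiener_F_fun_trig_series[OF assms(5,6) a(1)[OF assms(5)] a(1)[OF order_refl] y small] assms(4)
    by (simp add: c_def wiener_norm_eq_coeff_norm)
qed

end
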